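(* Let $G\in\mathbb{R}^{n\times n}$, $C:=\{X\in\mathbb{R}^{n\times n}\mid X\ge0\}$, $b:=[e^T\ e^T]^T\in\mathbb{R}^{2n}$, and consider \[ \min\Big\{\varphi(y):=\tfrac12\|\Pi_C(\mathcal{B}^*y+G)\|^2-\langle b,y\rangle-\tfrac12\|G\|^2\ \Big|\ y\in\mathrm{Ran}(\mathcal{B})\Big\}. \] Let $\{y^j\}$ be the infinite sequence generated by Algorithm SSNCG1 described in the context. Then $\{y^j\}\subseteq\mathrm{Ran}(\mathcal{B})$ is bounded, and any accumulation point $\hat y\in\mathrm{Ran}(\mathcal{B})$ of $\{y^j\}$ is an optimal solution of this minimization problem.
   Context: $e\in\mathbb{R}^n$ is the all-ones vector, $\|\cdot\|$ is the Frobenius/Euclidean norm, $\Pi_C$ is the projection onto $C$ (entrywise positive part). $\mathcal{B}:\mathbb{R}^{n\times n}\to\mathbb{R}^{2n}$, $\mathcal{B}(X)=[(Xe)^T\ (X^Te)^T]^T$, with adjoint $\mathcal{B}^*(y_1,y_2)=y_1e^T+ey_2^T$; $\mathrm{Ran}(\mathcal{B})$ is its range. The gradient is $\nabla\varphi(y)=\mathcal{B}\Pi_C(\mathcal{B}^*y+G)-b$. For $X\in\mathbb{R}^{n\times n}$ let $\Omega^X_{ij}=1$ if $X_{ij}\ge0$ and $0$ otherwise, and $\mathcal{U}(H)=\Omega^X\circ H$ ($\circ$ the Hadamard product). Algorithm SSNCG1: given $\mu\in(0,1/2)$, $\bar\eta\in(0,1)$, $\tau_1,\tau_2\in(0,1)$,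 $\tau\in(0,1]$, $\delta\in(0,1)$, and $y^0\in\mathrm{Ran}(\mathcal{B})$, for $j=0,1,\dots$: (1) take $\mathcal{U}_j$ as $\mathcal{U}$ with $X=\mathcal{B}^*y^j+G$, set $\mathcal{V}_j:=\mathcal{B}\mathcal{U}_j\mathcal{B}^*$ and $\varepsilon_j=\tau_1\min\{\tau_2,\|\nabla\varphi(y^j)\|\}$, and apply the conjugate gradient method starting from the zero vector to the linear system $(\mathcal{V}_j+\varepsilon_jI_{2n})d+\nabla\varphi(y^j)=0$, obtaining $d^j$ with $\|(\mathcal{V}_j+\varepsilon_jI_{2n})d^j+\nabla\varphi(y^j)\|\le\min(\bar\eta,\|\nabla\varphi(y^j)\|^{1+\tau})$; (2) set $\alpha_j=\delta^{m_j}$ where $m_j$ is the smallest nonnegative integer $m$ with $\varphi(y^j+\delta^md^j)\le\varphi(y^j)+\mu\delta^m\langle\nabla\varphi(y^j),d^j\rangle$; (3) set $y^{j+1}=y^j+\alpha_jd^j$. *)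

theory Defs
  imports "HOL-Analysis.Analysis"
begin

text \<open>Matrices in R^{n x n} are real^'n^'n (norm = Frobenius norm); vectors in
R^{2n} are pairs (y1, y2) of vectors in real^'n (norm/inner product = Euclidean).\<close>

definition ones :: "real ^ 'n" where "ones = (\<chi> i. 1)"

definition bvec :: "(real ^ 'n) \<times> (real ^ 'n)" where "bvec = (ones, ones)"

definition Bop :: "real ^ 'n ^ 'n \<Rightarrow> (real ^ 'n) \<times> (real ^ 'n)" where
  "Bop X = (X *v ones, transpose X *v ones)"

definition Bstar :: "(real ^ 'n) \<times> (real ^ 'n) \<Rightarrow> real ^ 'n ^ 'n" where
  "Bstar y = (\<chi> i j. fst y $ i + snd y $ j)"

definition RanB :: "((real ^ 'n) \<times> (real ^ 'n)) set" where
  "RanB = range Bop"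

definition projC :: "real ^ 'n ^ 'n \<Rightarrow> real ^ 'n ^ 'n" where
  "projC X = (\<chi> i j. max 0 (X $ i $ j))"

definition phi :: "real ^ 'n ^ 'n \<Rightarrow> (real ^ 'n) \<times> (real ^ 'n) \<Rightarrow> real" where
  "phi G y = (1/2) * (norm (projC (Bstar y + G)))\<^sup>2 - inner bvec y - (1/2) * (norm G)\<^sup>2"

definition grad_phi :: "real ^ 'n ^ 'n \<Rightarrow> (real ^ 'n) \<times> (real ^ 'n) \<Rightarrow> (real ^ 'n) \<times> (real ^ 'n)" where
  "grad_phi G y = Bop (projC (Bstar y + G)) - bvec"

definition Uop :: "real ^ 'n ^ 'n \<Rightarrow> real ^ 'n ^ 'n \<Rightarrow> real ^ 'n ^ 'n" where
  "Uop X H = (\<chi> i j. (if X $ i $ j \<ge> 0 then 1 else 0) * H $ i $ j)"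

definition Vop :: "real ^ 'n ^ 'n \<Rightarrow> (real ^ 'n) \<times> (real ^ 'n) \<Rightarrow> (real ^ 'n) \<times> (real ^ 'n)" where
  "Vop X d = Bop (Uop X (Bstar d))"

text \<open>Conjugate gradient method for the linear system A d + g = 0 (i.e. A d = -g),
started from the zero vector. State (x_k, r_k, p_k): iterate, residual -g - A x_k,
search direction.\<close>
fun cg :: "('a::real_inner \<Rightarrow> 'a) \<Rightarrow> 'a \<Rightarrow> nat \<Rightarrow> 'a \<times> 'a \<times> 'a" where
  "cg A g 0 = (0, -g, -g)"
| "cg A g (Suc k) =
     (case cg A g k of (x, r, p) \<Rightarrow>
        (let a = inner r r / inner p (A p);
             x' = x + a *\<^sub>R p;
             r' = r - a *\<^sub>R A p;
             bt = inner r' r' / inner r r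
         in (x', r', r' + bt *\<^sub>R p)))"

definition cg_iterate :: "('a::real_inner \<Rightarrow> 'a) \<Rightarrow> 'a \<Rightarrow> nat \<Rightarrow> 'a" where
  "cg_iterate A g k = fst (cg A g k)"

definition optimal :: "real ^ 'n ^ 'n \<Rightarrow> (real ^ 'n) \<times> (real ^ 'n) \<Rightarrow> bool" where
  "optimal G y \<longleftrightarrow> y \<in> RanB \<and> (\<forall>z \<in> RanB. phi G y \<le> phi G z)"

end

theory Submission
  imports Defs
begin

text \<open>
  phi is convex with Lipschitz gradient, so along a direction d it lies below the quadratic
  model phi y + t <\<nabla>phi y, d> + t^2 |B* d|^2 / 2. Every conjugate gradient iterate lowers
  the quadratic energy of V_j + \<epsilon>_j I, whence \<epsilon>_j |d_j|^2 \<le> -2 <\<nabla>phi y_j, d_j>; together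
  with the quadratic model this makes the Armijo search terminate with a step bounded below in
  terms of \<epsilon>_j. Since phi is coercive on Ran B (the vector b + t y has a bounded nonnegative
  preimage under B), the decreasing values phi y_j keep the iterates bounded and their
  decrements tend to 0. At an accumulation point with nonzero gradient, \<epsilon>_j stays away from 0
  along the subsequence, which forces d_j \<rightarrow> 0; then the CG residual tends to the norm of the
  limiting gradient, contradicting the residual bound min \<eta> (|\<nabla>phi y_j| powr (1 + \<tau>))
  with \<eta> < 1. Convexity turns a vanishing gradient into optimality.
\<close>

section \<open>The operators B and B*\<close>

lemma inner_matrix_eq_sum: "inner (X::real^'n^'m) Y = (\<Sum>i\<in>UNIV. \<Sum>j\<in>UNIV. X$i$j * Y$i$j)"
  by (simp add: inner_vec_def)

lemma norm_matrix_power2_eq_sum: "(norm (X::real^'n^'m))\<^sup>2 = (\<Sum>i\<in>UNIV. \<Sum>j\<in>UNIV. (X$i$j)\<^sup>2)"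
  unfolding power2_norm_eq_inner inner_matrix_eq_sum by (simp add: power2_eq_square)

lemma abs_matrix_entry_le_norm: "\<bar>X$i$j\<bar> \<le> norm (X::real^'n^'m)"
  using component_le_norm_cart[of "X$i" j] Finite_Cartesian_Product.norm_nth_le[of X i] by linarith

lemma inner_Bop_Bstar: "inner (Bop X) y = inner X (Bstar y)"
proof -
  obtain a c where y: "y = (a, c)" by (cases y)
  have "inner (Bop X) y = (\<Sum>i\<in>UNIV. (\<Sum>j\<in>UNIV. X$i$j) * a$i) + (\<Sum>j\<in>UNIV. (\<Sum>i\<in>UNIV. X$i$j) * c$j)"
    by (simp add: Bop_def y inner_prod_def inner_vec_def matrix_vector_mult_def transpose_def ones_def)
  also have "\<dots> = (\<Sum>i\<in>UNIV. \<Sum>j\<in>UNIV. X$i$j * a$i) + (\<Sum>i\<in>UNIV. \<Sum>j\<in>UNIV. X$i$j * c$j)"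
    by (simp add: sum_distrib_right sum.swap[of "\<lambda>i j. X$i$j * c$j"])
  also have "\<dots> = inner X (Bstar y)"
    by (simp add: inner_matrix_eq_sum Bstar_def y distrib_left sum.distrib)
  finally show ?thesis .
qed

lemma linear_Bop: "linear Bop"
  by (rule linearI)
     (simp_all add: Bop_def matrix_vector_mult_def transpose_def vec_eq_iff sum.distrib
       sum_distrib_left algebra_simps)

lemma linear_Bstar: "linear Bstar"
  by (rule linearI) (simp_all add: Bstar_def vec_eq_iff algebra_simps)

lemma linear_Vop: "linear (Vop X)"
proof -
  have "linear (Uop X)" by (rule linearI) (simp_all add: Uop_def vec_eq_iff algebra_simps)
  moreover have "Vop X = Bop \<circ> Uop X \<circ> Bstar" by (simp add: fun_eq_iff Vop_def)
  ultimately show ?thesis by (simp add: linear_compose linear_Bop linear_Bstar)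
qed

lemma inner_Vop_commute: "inner u (Vop X v) = inner (Vop X u) v"
proof -
  have "inner u (Vop X v) = inner (Uop X (Bstar v)) (Bstar u)"
    by (metis Vop_def inner_commute inner_Bop_Bstar)
  also have "\<dots> = inner (Uop X (Bstar u)) (Bstar v)"
    by (simp add: inner_matrix_eq_sum Uop_def algebra_simps)
  finally show ?thesis by (simp add: Vop_def inner_Bop_Bstar)
qed

lemma inner_Vop_nonneg: "0 \<le> inner v (Vop X v)"
proof -
  have "inner v (Vop X v) = (\<Sum>i\<in>UNIV. \<Sum>j\<in>UNIV. (if X$i$j \<ge> 0 then 1 else 0) * (Bstar v $i$j)\<^sup>2)"
    by (simp add: Vop_def inner_commute[of v] inner_Bop_Bstar inner_matrix_eq_sum Uop_def power2_eq_square algebra_simps)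
  also have "\<dots> \<ge> 0" by (intro sum_nonneg) auto
  finally show ?thesis .
qed

lemma norm_Uop_le: "norm (Uop X H) \<le> norm H"
proof -
  have "(norm (Uop X H))\<^sup>2 \<le> (norm H)\<^sup>2"
    unfolding norm_matrix_power2_eq_sum by (intro sum_mono) (auto simp: Uop_def power2_eq_square)
  then show ?thesis by (simp add: power2_le_iff_abs_le)
qed

lemma norm_Bstar_le: "norm (Bstar y :: real^'n^'n) \<le> sqrt (2 * CARD('n)) * norm y"
proof -
  obtain a c where y: "y = (a, c)" by (cases y)
  have "(norm (Bstar y :: real^'n^'n))\<^sup>2 = (\<Sum>i\<in>UNIV. \<Sum>j\<in>UNIV. (a$i + c$j)\<^sup>2)"
    by (simp add: norm_matrix_power2_eq_sum Bstar_def y)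
  also have "\<dots> \<le> (\<Sum>i\<in>UNIV. \<Sum>j\<in>UNIV. 2 * (a$i)\<^sup>2 + 2 * (c$j)\<^sup>2)"
  proof (intro sum_mono)
    fix i j
    have "0 \<le> (a$i - c$j)\<^sup>2" by simp
    then show "(a$i + c$j)\<^sup>2 \<le> 2 * (a$i)\<^sup>2 + 2 * (c$j)\<^sup>2"
      by (simp add: power2_eq_square algebra_simps)
  qed
  also have "\<dots> = 2 * CARD('n) * ((\<Sum>i\<in>UNIV. (a$i)\<^sup>2) + (\<Sum>j\<in>UNIV. (c$j)\<^sup>2))"
    by (simp add: sum.distrib sum_distrib_left algebra_simps)
  also have "\<dots> = 2 * CARD('n) * (norm y)\<^sup>2"
    unfolding y power2_norm_eq_inner by (simp add: inner_prod_def inner_vec_def power2_eq_square)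
  finally have "norm (Bstar y :: real^'n^'n) \<le> sqrt (2 * CARD('n) * (norm y)\<^sup>2)"
    by (rule real_le_rsqrt)
  then show ?thesis by (simp add: real_sqrt_mult)
qed

lemma norm_Bop_le: "norm (Bop X :: (real^'n) \<times> (real^'n)) \<le> sqrt (2 * CARD('n)) * norm X"
proof -
  have "(norm (Bop X))\<^sup>2 = inner X (Bstar (Bop X))"
    by (simp add: power2_norm_eq_inner inner_Bop_Bstar)
  also have "\<dots> \<le> norm X * norm (Bstar (Bop X) :: real^'n^'n)"
    by (rule norm_cauchy_schwarz)
  also have "\<dots> \<le> norm X * (sqrt (2 * CARD('n)) * norm (Bop X))"
    by (intro mult_left_mono norm_Bstar_le) simp
  finally have "norm (Bop X) * norm (Bop X) \<le> (sqrt (2 * CARD('n)) * norm X) * norm (Bop X)"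
    by (simp add: power2_eq_square algebra_simps)
  then show ?thesis
    by (cases "Bop X = 0") (auto simp: mult_le_cancel_right)
qed

lemma norm_Vop_le: "norm (Vop X v :: (real^'n) \<times> (real^'n)) \<le> 2 * CARD('n) * norm v"
proof -
  have "norm (Vop X v) \<le> sqrt (2 * CARD('n)) * norm (Uop X (Bstar v))"
    unfolding Vop_def by (rule norm_Bop_le)
  also have "\<dots> \<le> sqrt (2 * CARD('n)) * (sqrt (2 * CARD('n)) * norm v)"
    by (intro mult_left_mono order_trans[OF norm_Uop_le norm_Bstar_le]) simp
  also have "\<dots> = 2 * CARD('n) * norm v" by (simp add: mult.assoc[symmetric])
  finally show ?thesis .
qed

lemma subspace_RanB: "subspace RanB"
  unfolding RanB_def by (rule linear_subspace_image[OF linear_Bop subspace_UNIV])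

lemma bvec_in_RanB: "bvec \<in> RanB"
proof -
  have "Bop (mat 1) = bvec" by (simp add: Bop_def bvec_def)
  then show ?thesis unfolding RanB_def by (metis rangeI)
qed

lemma grad_phi_in_RanB: "grad_phi G y \<in> RanB"
  unfolding grad_phi_def
  by (rule subspace_diff[OF subspace_RanB _ bvec_in_RanB]) (simp add: RanB_def)

lemma Vop_in_RanB: "Vop X v \<in> RanB"
  by (simp add: Vop_def RanB_def)

section \<open>Projection onto the nonnegative orthant\<close>

lemma pos_part_sq_fenchel:
  fixes x w :: real
  assumes "0 \<le> x"
  shows "x * w - x\<^sup>2 / 2 \<le> (max 0 w)\<^sup>2 / 2"
proof -
  have "x * w \<le> x * max 0 w" using assms by (simp add: mult_left_mono)
  moreover have "(max 0 w - x)\<^sup>2 = (max 0 w)\<^sup>2 - 2 * (x * max 0 w) + x\<^sup>2"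
    by (simp add: power2_diff algebra_simps)
  moreover have "0 \<le> (max 0 w - x)\<^sup>2" by simp
  ultimately show ?thesis by linarith
qed

lemma pos_part_sq_lower:
  fixes s w :: real
  shows "(max 0 w)\<^sup>2 / 2 + max 0 w * (s - w) \<le> (max 0 s)\<^sup>2 / 2"
proof (cases "0 \<le> w")
  case True
  then show ?thesis
    using pos_part_sq_fenchel[OF True, of s] by (simp add: power2_eq_square algebra_simps)
qed simp

lemma pos_part_sq_upper:
  fixes s w :: real
  shows "(max 0 s)\<^sup>2 / 2 \<le> (max 0 w)\<^sup>2 / 2 + max 0 w * (s - w) + (s - w)\<^sup>2 / 2"
proof (cases "0 \<le> w")
  case True
  have "(max 0 s)\<^sup>2 \<le> s\<^sup>2" by (simp add: max_def)
  moreover have "w\<^sup>2 / 2 + w * (s - w) + (s - w)\<^sup>2 / 2 = s\<^sup>2 / 2"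
    by (simp add: power2_eq_square field_simps)
  ultimately show ?thesis using True by simp
next
  case False
  have "(max 0 s)\<^sup>2 \<le> (s - w)\<^sup>2" using False by (cases "0 \<le> s") (auto intro: power_mono)
  then show ?thesis using False by simp
qed

lemma norm_projC_diff_le: "norm (projC X - projC Y) \<le> norm (X - Y)"
proof -
  have "(max 0 a - max 0 b)\<^sup>2 \<le> (a - b)\<^sup>2" for a b :: real
    by (simp add: abs_le_square_iff[symmetric])
  then have "(norm (projC X - projC Y))\<^sup>2 \<le> (norm (X - Y))\<^sup>2"
    unfolding norm_matrix_power2_eq_sum by (intro sum_mono) (auto simp: projC_def)
  then show ?thesis by (simp add: power2_le_iff_abs_le)
qed

lemma norm_projC_sq_upper:
  "(norm (projC (W + H)))\<^sup>2 / 2 \<le> (norm (projC W))\<^sup>2 / 2 + inner (projC W) H + (norm H)\<^sup>2 / 2"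
proof -
  have "(norm (projC (W + H)))\<^sup>2 / 2 = (\<Sum>i\<in>UNIV. \<Sum>j\<in>UNIV. (max 0 (W$i$j + H$i$j))\<^sup>2 / 2)"
    by (simp add: norm_matrix_power2_eq_sum projC_def sum_divide_distrib)
  also have "\<dots> \<le> (\<Sum>i\<in>UNIV. \<Sum>j\<in>UNIV.
                    (max 0 (W$i$j))\<^sup>2 / 2 + max 0 (W$i$j) * H$i$j + (H$i$j)\<^sup>2 / 2)"
    using pos_part_sq_upper[of "W$i$j + H$i$j" "W$i$j" for i j] by (intro sum_mono) simp
  also have "\<dots> = (norm (projC W))\<^sup>2 / 2 + inner (projC W) H + (norm H)\<^sup>2 / 2"
    by (simp add: norm_matrix_power2_eq_sum inner_matrix_eq_sum projC_def sum.distrib sum_divide_distrib)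
  finally show ?thesis .
qed

lemma norm_projC_sq_lower:
  "(norm (projC W))\<^sup>2 / 2 + inner (projC W) H \<le> (norm (projC (W + H)))\<^sup>2 / 2"
proof -
  have "(norm (projC W))\<^sup>2 / 2 + inner (projC W) H
      = (\<Sum>i\<in>UNIV. \<Sum>j\<in>UNIV. (max 0 (W$i$j))\<^sup>2 / 2 + max 0 (W$i$j) * H$i$j)"
    by (simp add: norm_matrix_power2_eq_sum inner_matrix_eq_sum projC_def sum.distrib sum_divide_distrib)
  also have "\<dots> \<le> (\<Sum>i\<in>UNIV. \<Sum>j\<in>UNIV. (max 0 (W$i$j + H$i$j))\<^sup>2 / 2)"
    using pos_part_sq_lower[of "W$i$j" "W$i$j + H$i$j" for i j] by (intro sum_mono) simp
  also have "\<dots> = (norm (projC (W + H)))\<^sup>2 / 2"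
    by (simp add: norm_matrix_power2_eq_sum projC_def sum_divide_distrib)
  finally show ?thesis .
qed

lemma norm_projC_sq_fenchel:
  assumes "\<And>i j. 0 \<le> X$i$j"
  shows "inner X W - (norm X)\<^sup>2 / 2 \<le> (norm (projC W))\<^sup>2 / 2"
proof -
  have "inner X W - (norm X)\<^sup>2 / 2 = (\<Sum>i\<in>UNIV. \<Sum>j\<in>UNIV. X$i$j * W$i$j - (X$i$j)\<^sup>2 / 2)"
    by (simp add: norm_matrix_power2_eq_sum inner_matrix_eq_sum sum_subtractf sum_divide_distrib)
  also have "\<dots> \<le> (\<Sum>i\<in>UNIV. \<Sum>j\<in>UNIV. (max 0 (W$i$j))\<^sup>2 / 2)"
    using pos_part_sq_fenchel[OF assms] by (intro sum_mono) simp
  also have "\<dots> = (norm (projC W))\<^sup>2 / 2"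
    by (simp add: norm_matrix_power2_eq_sum projC_def sum_divide_distrib)
  finally show ?thesis .
qed

section \<open>Convexity, smoothness and coercivity of phi\<close>

lemma phi_upper_quadratic:
  "phi G (y + t *\<^sub>R d) \<le> phi G y + t * inner (grad_phi G y) d + t\<^sup>2 / 2 * (norm (Bstar d))\<^sup>2"
proof -
  define W where "W = Bstar y + G"
  have "Bstar (y + t *\<^sub>R d) + G = W + t *\<^sub>R Bstar d"
    by (simp add: W_def linear_add[OF linear_Bstar] linear_scale[OF linear_Bstar] algebra_simps)
  moreover have "(norm (projC (W + t *\<^sub>R Bstar d)))\<^sup>2 / 2
      \<le> (norm (projC W))\<^sup>2 / 2 + t * inner (Bop (projC W)) d + t\<^sup>2 / 2 * (norm (Bstar d))\<^sup>2"
    using norm_projC_sq_upper[of W "t *\<^sub>R Bstar d"] by (simp add: inner_Bop_Bstar power_mult_distrib)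
  ultimately show ?thesis
    unfolding phi_def grad_phi_def W_def[symmetric] by (simp add: inner_diff_left algebra_simps)
qed

lemma phi_gradient_inequality: "phi G y + inner (grad_phi G y) (z - y) \<le> phi G z"
proof -
  define W where "W = Bstar y + G"
  have "Bstar z + G = W + Bstar (z - y)"
    by (simp add: W_def linear_diff[OF linear_Bstar] algebra_simps)
  moreover have "(norm (projC W))\<^sup>2 / 2 + inner (Bop (projC W)) (z - y)
                   \<le> (norm (projC (W + Bstar (z - y))))\<^sup>2 / 2"
    using norm_projC_sq_lower[of W "Bstar (z - y)"] by (simp add: inner_Bop_Bstar)
  ultimately show ?thesis
    unfolding phi_def grad_phi_def W_def[symmetric] by (simp add: inner_diff_left inner_diff_right algebra_simps)
qed

lemma optimal_if_grad_phi_eq_0: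
  assumes "y \<in> RanB" "grad_phi G y = 0"
  shows "optimal G y"
  using assms phi_gradient_inequality[of G y] by (simp add: optimal_def)

lemma grad_phi_lipschitz:
  fixes G :: "real^'n^'n"
  shows "norm (grad_phi G y - grad_phi G z) \<le> 2 * CARD('n) * norm (y - z)"
proof -
  have "norm (grad_phi G y - grad_phi G z) = norm (Bop (projC (Bstar y + G) - projC (Bstar z + G)))"
    by (simp add: grad_phi_def linear_diff[OF linear_Bop])
  also have "\<dots> \<le> sqrt (2 * CARD('n)) * norm (Bstar y + G - (Bstar z + G))"
    by (intro order_trans[OF norm_Bop_le] mult_left_mono norm_projC_diff_le) simp
  also have "Bstar y + G - (Bstar z + G) = Bstar (y - z)"
    by (simp add: linear_diff[OF linear_Bstar])
  also have "sqrt (2 * CARD('n)) * norm (Bstar (y - z) :: real^'n^'n)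
               \<le> sqrt (2 * CARD('n)) * (sqrt (2 * CARD('n)) * norm (y - z))"
    by (intro mult_left_mono norm_Bstar_le) simp
  finally show ?thesis by (simp add: mult.assoc[symmetric])
qed

lemma isCont_grad_phi:
  fixes G :: "real^'n^'n"
  shows "isCont (grad_phi G) y"
proof -
  have "(2 * CARD('n))-lipschitz_on UNIV (grad_phi G)"
    unfolding lipschitz_on_def dist_norm using grad_phi_lipschitz by auto
  then show ?thesis
    using continuous_on_eq_continuous_at lipschitz_on_continuous_on by blast
qed

text \<open>For (a, c) in Ran B the sums of a and of c agree, and the matrix
  (a e^T + e c^T) / n - (e^T a) e e^T / n^2 has row sums a and column sums c.\<close>

definition Bop_rinv :: "(real^'n) \<times> (real^'n) \<Rightarrow> real^'n^'n" where
  "Bop_rinv u = (\<chi> i j. fst u $ i / CARD('n) + snd u $ j / CARD('n)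
                         - (\<Sum>k\<in>UNIV. fst u $ k) / (CARD('n) * CARD('n)))"

lemma linear_Bop_rinv: "linear Bop_rinv"
  by (rule linearI)
     (simp_all add: Bop_rinv_def vec_eq_iff sum.distrib sum_distrib_left add_divide_distrib
        diff_divide_distrib algebra_simps)

lemma Bop_rinv_bvec: "Bop_rinv (bvec :: (real^'n) \<times> (real^'n)) = (\<chi> i j. 1 / CARD('n))"
  by (simp add: Bop_rinv_def bvec_def ones_def vec_eq_iff power2_eq_square[symmetric] field_simps)

lemma sum_fst_eq_sum_snd_if_in_RanB:
  "u \<in> RanB \<Longrightarrow> (\<Sum>k\<in>UNIV. fst u $ k) = (\<Sum>k\<in>UNIV. snd u $ k)"
  unfolding RanB_def Bop_def
  by (auto simp: matrix_vector_mult_def transpose_def ones_def intro: sum.swap)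

lemma Bop_Bop_rinv:
  fixes u :: "(real^'n) \<times> (real^'n)"
  assumes "u \<in> RanB"
  shows "Bop (Bop_rinv u) = u"
proof -
  obtain a c where u: "u = (a, c)" by (cases u)
  define n where "n = real CARD('n)"
  have n: "n \<noteq> 0" by (simp add: n_def)
  have sums: "(\<Sum>k\<in>UNIV. a $ k) = (\<Sum>k\<in>UNIV. c $ k)"
    using sum_fst_eq_sum_snd_if_in_RanB[OF assms] u by simp
  have rows: "(Bop_rinv u *v ones) $ i = a $ i" for i
  proof -
    have "(Bop_rinv u *v ones) $ i
            = n * (a $ i / n) + (\<Sum>j\<in>UNIV. c $ j) / n - n * ((\<Sum>k\<in>UNIV. a $ k) / (n * n))"
      by (simp add: Bop_rinv_def u matrix_vector_mult_def ones_def n_def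
            sum.distrib sum_subtractf sum_divide_distrib)
    then show ?thesis using n sums by simp
  qed
  have cols: "(transpose (Bop_rinv u) *v ones) $ j = c $ j" for j
  proof -
    have "(transpose (Bop_rinv u) *v ones) $ j
            = (\<Sum>i\<in>UNIV. a $ i) / n + n * (c $ j / n) - n * ((\<Sum>k\<in>UNIV. a $ k) / (n * n))"
      by (simp add: Bop_rinv_def u matrix_vector_mult_def transpose_def ones_def n_def
            sum.distrib sum_subtractf sum_divide_distrib)
    then show ?thesis using n by simp
  qed
  show ?thesis using rows cols by (simp add: Bop_def u vec_eq_iff)
qed

lemma RanB_nonneg_preimage:
  "\<exists>c>0. \<exists>M. \<forall>u\<in>RanB. \<exists>X :: real^'n^'n.
     (\<forall>i j. 0 \<le> X$i$j) \<and> norm X \<le> M \<and> Bop X = bvec + (c / norm u) *\<^sub>R u"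
proof -
  define n where "n = real CARD('n)"
  have n: "0 < n" by (simp add: n_def)
  obtain K where K: "0 < K" "\<And>u. norm (Bop_rinv u :: real^'n^'n) \<le> norm u * K"
    using linear_Bop_rinv linear_conv_bounded_linear bounded_linear.pos_bounded by blast
  define c where "c = 1 / (n * K)"
  have c: "0 < c" using n K by (simp add: c_def)
  define M where "M = K * (norm (bvec :: (real^'n) \<times> (real^'n)) + c)"
  have "\<exists>X :: real^'n^'n. (\<forall>i j. 0 \<le> X$i$j) \<and> norm X \<le> M
          \<and> Bop X = bvec + (c / norm u) *\<^sub>R u" if u: "u \<in> RanB" for u
  proof -
    define t where "t = c / norm u"
    define X where "X = Bop_rinv (bvec + t *\<^sub>R u)"
    have t: "0 \<le> t" "t * norm u \<le> c"
      using c by (auto simp: t_def)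
    have tZ: "t * norm (Bop_rinv u :: real^'n^'n) \<le> 1 / n"
    proof -
      have "t * norm (Bop_rinv u :: real^'n^'n) \<le> (t * norm u) * K"
        using K(2)[of u] t(1) by (simp add: mult_left_mono mult.assoc)
      also have "\<dots> \<le> c * K" using t(2) K(1) by (simp add: mult_right_mono)
      finally show ?thesis using n K by (simp add: c_def)
    qed
    have X: "X = (\<chi> i j. 1 / n) + t *\<^sub>R Bop_rinv u"
      by (simp add: X_def linear_add[OF linear_Bop_rinv] linear_scale[OF linear_Bop_rinv]
            Bop_rinv_bvec n_def)
    have "0 \<le> X$i$j" for i j
    proof -
      have "- (t * Bop_rinv u $ i $ j) \<le> t * norm (Bop_rinv u :: real^'n^'n)"
        using mult_left_mono[OF abs_matrix_entry_le_norm[of "Bop_rinv u" i j] t(1)]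
          mult_left_mono[OF abs_ge_minus_self[of "Bop_rinv u $ i $ j"] t(1)] by linarith
      then show ?thesis using tZ by (simp add: X)
    qed
    moreover have "norm X \<le> M"
    proof -
      have "norm X \<le> norm (bvec + t *\<^sub>R u) * K" unfolding X_def by (rule K(2))
      also have "\<dots> \<le> (norm (bvec :: (real^'n) \<times> (real^'n)) + t * norm u) * K"
        using t(1) K(1) by (intro mult_right_mono order_trans[OF norm_triangle_ineq]) auto
      also have "\<dots> \<le> M" using t(2) K(1) by (simp add: M_def algebra_simps)
      finally show ?thesis .
    qed
    moreover have "Bop X = bvec + (c / norm u) *\<^sub>R u"
      unfolding X_def t_def
      by (intro Bop_Bop_rinv subspace_add[OF subspace_RanB bvec_in_RanB]
            subspace_mul[OF subspace_RanB u])
    ultimately show ?thesis by blast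
  qed
  then show ?thesis using c by blast
qed

lemma phi_coercive_on_RanB:
  fixes G :: "real^'n^'n"
  shows "\<exists>c>0. \<exists>c'. \<forall>y\<in>RanB. c * norm y - c' \<le> phi G y"
proof -
  obtain c M where c: "0 < c" and pre: "\<And>u. u \<in> RanB \<Longrightarrow> \<exists>X :: real^'n^'n.
      (\<forall>i j. 0 \<le> X$i$j) \<and> norm X \<le> M \<and> Bop X = bvec + (c / norm u) *\<^sub>R u"
    using RanB_nonneg_preimage by blast
  have "c * norm y - (M * norm G + M\<^sup>2 / 2 + (norm G)\<^sup>2 / 2) \<le> phi G y" if y: "y \<in> RanB" for y
  proof -
    obtain X :: "real^'n^'n" where X: "\<And>i j. 0 \<le> X$i$j" "norm X \<le> M"
      and BX: "Bop X = bvec + (c / norm y) *\<^sub>R y"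
      using pre[OF y] by blast
    have "inner X (Bstar y) = inner bvec y + c * norm y"
      by (simp add: inner_Bop_Bstar[symmetric] BX inner_add_left power2_norm_eq_inner[symmetric]
            power2_eq_square)
    moreover have "- (M * norm G) \<le> inner X G"
      using norm_cauchy_schwarz[of X "- G"] mult_right_mono[OF X(2) norm_ge_zero[of G]] by simp
    moreover have "(norm X)\<^sup>2 \<le> M\<^sup>2" using X(2) by (simp add: power_mono)
    moreover have "inner X (Bstar y + G) - (norm X)\<^sup>2 / 2 \<le> (norm (projC (Bstar y + G)))\<^sup>2 / 2"
      by (rule norm_projC_sq_fenchel[OF X(1)])
    ultimately show ?thesis by (simp add: phi_def inner_add_right)
  qed
  then show ?thesis using c by blast
qed

lemma phi_armijo:
  fixes G :: "real^'n^'n" and e t \<mu> :: real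
  assumes descent: "e * (norm d)\<^sup>2 \<le> - 2 * inner (grad_phi G y) d"
    and t: "0 \<le> t" "t * (2 * CARD('n)) \<le> (1 - \<mu>) * e" and "\<mu> \<le> 1"
  shows "phi G (y + t *\<^sub>R d) \<le> phi G y + \<mu> * t * inner (grad_phi G y) d"
proof -
  define q where "q = inner (grad_phi G y) d"
  define D where "D = (norm d)\<^sup>2"
  have "(norm (Bstar d :: real^'n^'n))\<^sup>2 \<le> 2 * CARD('n) * D"
    using power_mono[OF norm_Bstar_le[of d] norm_ge_zero, of 2] by (simp add: D_def power_mult_distrib)
  then have "t\<^sup>2 / 2 * (norm (Bstar d :: real^'n^'n))\<^sup>2 \<le> t\<^sup>2 / 2 * (2 * CARD('n) * D)"
    by (rule mult_left_mono) simp
  also have "\<dots> = (t * D / 2) * (t * (2 * CARD('n)))" by (simp add: power2_eq_square)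
  also have "\<dots> \<le> (t * D / 2) * ((1 - \<mu>) * e)"
    using t by (intro mult_left_mono) (simp_all add: D_def)
  also have "\<dots> = (t * (1 - \<mu>) / 2) * (e * D)" by (simp add: algebra_simps)
  also have "\<dots> \<le> (t * (1 - \<mu>) / 2) * (- 2 * q)"
    using descent t(1) \<open>\<mu> \<le> 1\<close> by (intro mult_left_mono) (simp_all add: D_def q_def)
  finally have "t\<^sup>2 / 2 * (norm (Bstar d :: real^'n^'n))\<^sup>2 \<le> (\<mu> - 1) * t * q"
    by (simp add: algebra_simps)
  then show ?thesis
    using phi_upper_quadratic[of G y t d] by (simp add: q_def algebra_simps)
qed

section \<open>Conjugate gradients\<close>

lemma cg_zero: "linear A \<Longrightarrow> cg A 0 k = (0, 0, 0)"
  by (induction k) (simp_all add: linear_0 Let_def)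

lemma cg_in_subspace:
  assumes "subspace S" "\<And>v. v \<in> S \<Longrightarrow> A v \<in> S" "g \<in> S"
  shows "case cg A g k of (x, r, p) \<Rightarrow> x \<in> S \<and> r \<in> S \<and> p \<in> S"
proof (induction k)
  case 0
  then show ?case using assms by (simp add: subspace_0 subspace_neg)
next
  case (Suc k)
  obtain x r p where c: "cg A g k = (x, r, p)" by (cases "cg A g k")
  with Suc.IH have "x \<in> S" "r \<in> S" "p \<in> S" by auto
  with assms show ?case
    by (simp add: c Let_def subspace_add subspace_diff subspace_mul)
qed

lemma quadratic_along_line:
  fixes A :: "'a::real_inner \<Rightarrow> 'a"
  assumes "linear A" "\<And>u v. inner u (A v) = inner (A u) v"
  shows "inner (x + a *\<^sub>R p) (A (x + a *\<^sub>R p)) / 2 + inner g (x + a *\<^sub>R p)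
           = inner x (A x) / 2 + inner g x + a * inner p (A x + g) + a\<^sup>2 * inner p (A p) / 2"
  using assms(2)[of x p]
  by (simp add: linear_add[OF assms(1)] linear_scale[OF assms(1)] inner_add_left inner_add_right
        inner_commute[of g p] inner_commute[of p "A x"] power2_eq_square algebra_simps)

lemma cg_invariant:
  fixes A :: "'a::real_inner \<Rightarrow> 'a"
  assumes lin: "linear A" and sym: "\<And>u v. inner u (A v) = inner (A u) v"
    and pd: "\<And>v. v \<noteq> 0 \<Longrightarrow> 0 < inner v (A v)"
  shows "case cg A g k of (x, r, p) \<Rightarrow>
           r = - g - A x \<and> inner r p = inner r r \<and> inner x (A x) / 2 + inner g x \<le> 0"
proof (induction k)
  case 0
  then show ?case by (simp add: linear_0[OF lin])
next
  case (Suc k)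
  obtain x r p where c: "cg A g k = (x, r, p)" by (cases "cg A g k")
  with Suc.IH have r: "r = - g - A x" and rp: "inner r p = inner r r"
    and energy: "inner x (A x) / 2 + inner g x \<le> 0" by auto
  define a where "a = inner r r / inner p (A p)"
  define r' where "r' = r - a *\<^sub>R A p"
  define b where "b = inner r' r' / inner r r"
  have step: "cg A g (Suc k) = (x + a *\<^sub>R p, r', r' + b *\<^sub>R p)"
    by (simp add: c Let_def a_def r'_def b_def)
  have r': "r' = - g - A (x + a *\<^sub>R p)"
    using r by (simp add: r'_def linear_add[OF lin] linear_scale[OF lin])
  have "inner (x + a *\<^sub>R p) (A (x + a *\<^sub>R p)) / 2 + inner g (x + a *\<^sub>R p) \<le> 0
          \<and> inner r' (r' + b *\<^sub>R p) = inner r' r'"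
  proof (cases "p = 0")
    case True
    then show ?thesis using energy by simp
  next
    case False
    then have a: "a * inner p (A p) = inner r r" "0 \<le> a"
      using pd[of p] by (simp_all add: a_def)
    have "inner r' p = 0"
      using a(1) by (simp add: r'_def inner_diff_left rp inner_commute[of "A p" p])
    moreover have "A x + g = - r" using r by simp
    then have "inner p (A x + g) = - inner r r" using rp by (simp add: inner_commute[of p r])
    \<comment> \<open>a minimizes the energy along p, lowering it by a \<langle>r, r\<rangle> / 2\<close>
    then have "inner (x + a *\<^sub>R p) (A (x + a *\<^sub>R p)) / 2 + inner g (x + a *\<^sub>R p)
                 = inner x (A x) / 2 + inner g x - a * inner r r / 2"
      using a(1) by (simp add: quadratic_along_line[OF lin sym] power2_eq_square mult.assoc)
    moreover have "0 \<le> a * inner r r" using a(2) by simp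
    ultimately show ?thesis using energy by (simp add: inner_add_right)
  qed
  then show ?case unfolding step prod.case using r' by blast
qed

lemma cg_iterate_energy_nonpos:
  fixes A :: "'a::real_inner \<Rightarrow> 'a"
  assumes "linear A" "\<And>u v. inner u (A v) = inner (A u) v" "\<And>v. v \<noteq> 0 \<Longrightarrow> 0 < inner v (A v)"
  shows "inner (cg_iterate A g k) (A (cg_iterate A g k)) / 2 + inner g (cg_iterate A g k) \<le> 0"
  using cg_invariant[OF assms, of g k] by (simp add: cg_iterate_def split: prod.splits)

lemma backtracking_Least:
  fixes \<delta> c :: real
  assumes \<delta>: "0 < \<delta>" "\<delta> < 1" and "0 < c" and suff: "\<And>m. \<delta> ^ m \<le> c \<Longrightarrow> P m"
  shows "P (LEAST m. P m)" and "min 1 (\<delta> * c) \<le> \<delta> ^ (LEAST m. P m)"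
proof -
  obtain m where "\<delta> ^ m < c" using real_arch_pow_inv[OF \<open>0 < c\<close> \<delta>(2)] by blast
  then show "P (LEAST m. P m)" using suff[of m] by (intro LeastI[of P m]) simp
  show "min 1 (\<delta> * c) \<le> \<delta> ^ (LEAST m. P m)"
  proof (cases "LEAST m. P m")
    case (Suc m)
    then have "\<not> P m" using not_less_Least[of m P] by simp
    then have "c < \<delta> ^ m" using suff[of m] by fastforce
    then show ?thesis using Suc \<delta> by (simp add: min.coboundedI2)
  qed simp
qed

lemma powr_one_plus_less_self:
  fixes x \<tau> :: real
  assumes "0 < x" "x < 1" "0 < \<tau>"
  shows "x powr (1 + \<tau>) < x"
proof -
  have "x powr \<tau> < 1" using assms powr_less_mono2[of \<tau> x 1] by simp
  then show ?thesis using assms by (simp add: powr_add)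
qed

lemma decseq_diff_tendsto_zero:
  fixes f :: "nat \<Rightarrow> real"
  assumes "decseq f" "\<And>j. c \<le> f j"
  shows "(\<lambda>j. f j - f (Suc j)) \<longlonglongrightarrow> 0"
proof -
  obtain L where "f \<longlonglongrightarrow> L" using decseq_convergent[of f c] assms by blast
  then have "(\<lambda>j. f j - f (Suc j)) \<longlonglongrightarrow> L - L" by (intro tendsto_diff LIMSEQ_Suc)
  then show ?thesis by simp
qed

section \<open>Convergence of SSNCG1\<close>

text \<open>The hypotheses of the theorem, weakened to what the argument uses: \<mu> < 1 instead of
  \<mu> < 1/2 (which only matters for the rate of convergence); no bounds on \<eta> from below, on \<tau>
  from above or on \<tau>1, \<tau>2 from above. In the paper's notation, reg j is \<epsilon>_j, newton_op j
  is V_j + \<epsilon>_j I and step j is \<alpha>_j.\<close>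

locale ssncg1 =
  fixes G :: "real ^ 'n ^ 'n"
    and y d :: "nat \<Rightarrow> (real ^ 'n) \<times> (real ^ 'n)"
    and \<mu> \<eta> \<tau>1 \<tau>2 \<tau> \<delta> :: real
  assumes mu: "0 < \<mu>" "\<mu> < 1" and eta: "\<eta> < 1"
    and tau: "0 < \<tau>1" "0 < \<tau>2" "0 < \<tau>"
    and delta: "0 < \<delta>" "\<delta> < 1"
    and y0_in_RanB: "y 0 \<in> RanB"
    and cg_step: "\<And>j. \<exists>k.
        (let A = (\<lambda>v. Vop (Bstar (y j) + G) v
                      + (\<tau>1 * min \<tau>2 (norm (grad_phi G (y j)))) *\<^sub>R v)
         in d j = cg_iterate A (grad_phi G (y j)) k
            \<and> norm (A (d j) + grad_phi G (y j))
                \<le> min \<eta> (norm (grad_phi G (y j)) powr (1 + \<tau>)))"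
    and ls_step: "\<And>j. y (Suc j) = y j +
        (\<delta> ^ (LEAST m. phi G (y j + (\<delta> ^ m) *\<^sub>R d j)
                 \<le> phi G (y j) + \<mu> * \<delta> ^ m * inner (grad_phi G (y j)) (d j))) *\<^sub>R d j"
begin

abbreviation grad :: "nat \<Rightarrow> (real ^ 'n) \<times> (real ^ 'n)" where
  "grad j \<equiv> grad_phi G (y j)"

definition reg :: "nat \<Rightarrow> real" where
  "reg j = \<tau>1 * min \<tau>2 (norm (grad j))"

definition newton_op :: "nat \<Rightarrow> (real ^ 'n) \<times> (real ^ 'n) \<Rightarrow> (real ^ 'n) \<times> (real ^ 'n)" where
  "newton_op j = (\<lambda>v. Vop (Bstar (y j) + G) v + reg j *\<^sub>R v)"

definition armijo :: "nat \<Rightarrow> nat \<Rightarrow> bool" where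
  "armijo j m \<longleftrightarrow> phi G (y j + \<delta> ^ m *\<^sub>R d j) \<le> phi G (y j) + \<mu> * \<delta> ^ m * inner (grad j) (d j)"

definition step :: "nat \<Rightarrow> real" where
  "step j = \<delta> ^ (LEAST m. armijo j m)"

lemma y_Suc: "y (Suc j) = y j + step j *\<^sub>R d j"
  using ls_step[of j] by (simp add: step_def armijo_def)

lemma direction_by_cg:
  "\<exists>k. d j = cg_iterate (newton_op j) (grad j) k
       \<and> norm (newton_op j (d j) + grad j) \<le> min \<eta> (norm (grad j) powr (1 + \<tau>))"
  using cg_step[of j] by (simp add: Let_def newton_op_def reg_def)

lemma cg_residual_le: "norm (newton_op j (d j) + grad j) \<le> min \<eta> (norm (grad j) powr (1 + \<tau>))"
  using direction_by_cg by blast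

lemma reg_nonneg: "0 \<le> reg j"
  using tau by (simp add: reg_def)

lemma reg_le: "reg j \<le> \<tau>1 * \<tau>2"
  using tau by (simp add: reg_def)

lemma reg_pos: "grad j \<noteq> 0 \<Longrightarrow> 0 < reg j"
  using tau by (simp add: reg_def)

lemma linear_newton_op: "linear (newton_op j)"
  by (rule linearI)
     (simp_all add: newton_op_def linear_add[OF linear_Vop] linear_scale[OF linear_Vop] algebra_simps)

lemma inner_newton_op_commute: "inner u (newton_op j v) = inner (newton_op j u) v"
  by (simp add: newton_op_def inner_add_right inner_add_left inner_Vop_commute)

lemma reg_le_inner_newton_op: "reg j * (norm v)\<^sup>2 \<le> inner v (newton_op j v)"
  using inner_Vop_nonneg[of v "Bstar (y j) + G"]
  by (simp add: newton_op_def inner_add_right power2_norm_eq_inner)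

lemma norm_newton_op_le: "norm (newton_op j v) \<le> (2 * CARD('n) + \<tau>1 * \<tau>2) * norm v"
proof -
  have "norm (newton_op j v) \<le> norm (Vop (Bstar (y j) + G) v) + reg j * norm v"
    using norm_triangle_ineq[of "Vop (Bstar (y j) + G) v" "reg j *\<^sub>R v"] reg_nonneg[of j]
    by (simp add: newton_op_def)
  also have "\<dots> \<le> 2 * CARD('n) * norm v + \<tau>1 * \<tau>2 * norm v"
    by (intro add_mono norm_Vop_le mult_right_mono reg_le) simp
  finally show ?thesis by (simp add: distrib_right)
qed

lemma direction_in_RanB: "d j \<in> RanB"
proof -
  obtain k where k: "d j = cg_iterate (newton_op j) (grad j) k" using direction_by_cg by blast
  have "newton_op j v \<in> RanB" if "v \<in> RanB" for v
    using that by (simp add: newton_op_def subspace_add[OF subspace_RanB]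
                    subspace_mul[OF subspace_RanB] Vop_in_RanB)
  then have "case cg (newton_op j) (grad j) k of (x, r, p) \<Rightarrow> x \<in> RanB \<and> r \<in> RanB \<and> p \<in> RanB"
    by (intro cg_in_subspace subspace_RanB grad_phi_in_RanB)
  then show ?thesis using k by (simp add: cg_iterate_def split: prod.splits)
qed

lemma direction_eq_0: "grad j = 0 \<Longrightarrow> d j = 0"
  using direction_by_cg[of j] cg_zero[OF linear_newton_op] by (auto simp: cg_iterate_def)

lemma direction_descent: "reg j * (norm (d j))\<^sup>2 \<le> - 2 * inner (grad j) (d j)"
proof (cases "grad j = 0")
  case False
  have pd: "0 < inner v (newton_op j v)" if "v \<noteq> 0" for v
  proof -
    have "0 < reg j * (norm v)\<^sup>2" using reg_pos[OF False] that by simp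
    then show ?thesis using reg_le_inner_newton_op[of j v] by linarith
  qed
  obtain k where "d j = cg_iterate (newton_op j) (grad j) k" using direction_by_cg by blast
  then have "inner (d j) (newton_op j (d j)) / 2 + inner (grad j) (d j) \<le> 0"
    using cg_iterate_energy_nonpos[OF linear_newton_op inner_newton_op_commute pd] by simp
  then show ?thesis using reg_le_inner_newton_op[of j "d j"] by linarith
qed (simp add: direction_eq_0)

lemma armijo_if_small_step:
  assumes "\<delta> ^ m * (2 * CARD('n)) \<le> (1 - \<mu>) * reg j"
  shows "armijo j m"
  using phi_armijo[OF direction_descent _ assms] mu delta by (simp add: armijo_def)

lemma armijo_if_stationary: "grad j = 0 \<Longrightarrow> armijo j m"
  by (simp add: armijo_def direction_eq_0)

lemma armijo_step: "armijo j (LEAST m. armijo j m)"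
proof (cases "grad j = 0")
  case True
  then show ?thesis by (rule LeastI[OF armijo_if_stationary])
next
  case False
  define c where "c = (1 - \<mu>) * reg j / (2 * CARD('n))"
  have "0 < c" using mu reg_pos[OF False] by (simp add: c_def)
  moreover have "armijo j m" if "\<delta> ^ m \<le> c" for m
    using that by (intro armijo_if_small_step) (simp add: c_def pos_le_divide_eq)
  ultimately show ?thesis using delta by (rule_tac backtracking_Least(1)[of \<delta> c])
qed

lemma step_lower_bound:
  assumes "0 < \<epsilon>" "\<epsilon> \<le> reg j"
  shows "min 1 (\<delta> * ((1 - \<mu>) * \<epsilon> / (2 * CARD('n)))) \<le> step j"
proof -
  define c where "c = (1 - \<mu>) * reg j / (2 * CARD('n))"
  have "0 < c" using mu assms by (simp add: c_def)
  moreover have "armijo j m" if "\<delta> ^ m \<le> c" for m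
    using that by (intro armijo_if_small_step) (simp add: c_def pos_le_divide_eq)
  ultimately have "min 1 (\<delta> * c) \<le> step j"
    unfolding step_def using delta by (rule_tac backtracking_Least(2)[of \<delta> c])
  moreover have "(1 - \<mu>) * \<epsilon> / (2 * CARD('n)) \<le> c"
    using mu assms by (simp add: c_def divide_right_mono)
  ultimately show ?thesis using delta by (smt (verit) mult_left_mono)
qed

lemma step_pos: "0 < step j"
  using delta by (simp add: step_def)

lemma sufficient_decrease: "\<mu> * step j * reg j * (norm (d j))\<^sup>2 / 2 \<le> phi G (y j) - phi G (y (Suc j))"
proof -
  have "phi G (y (Suc j)) \<le> phi G (y j) + \<mu> * step j * inner (grad j) (d j)"
    using armijo_step[of j] by (simp add: armijo_def y_Suc step_def)
  moreover have "\<mu> * step j * (reg j * (norm (d j))\<^sup>2) \<le> \<mu> * step j * (- 2 * inner (grad j) (d j))"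
    using mu step_pos[of j] direction_descent[of j] by (intro mult_left_mono) simp_all
  ultimately show ?thesis by (simp add: algebra_simps)
qed

lemma y_in_RanB: "y j \<in> RanB"
  by (induction j)
     (simp_all add: y0_in_RanB y_Suc direction_in_RanB subspace_add[OF subspace_RanB]
        subspace_mul[OF subspace_RanB])

lemma decseq_phi_y: "decseq (\<lambda>j. phi G (y j))"
proof (rule decseq_SucI)
  fix j
  have "0 \<le> \<mu> * step j * reg j * (norm (d j))\<^sup>2 / 2"
    using mu step_pos[of j] reg_nonneg[of j] by simp
  then show "phi G (y (Suc j)) \<le> phi G (y j)" using sufficient_decrease[of j] by linarith
qed

lemma phi_y_bounds:
  obtains c c' where "0 < c" "\<And>j. c * norm (y j) - c' \<le> phi G (y j)" "\<And>j. phi G (y j) \<le> phi G (y 0)"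
proof -
  obtain c c' where "0 < c" "\<forall>z\<in>RanB. c * norm z - c' \<le> phi G z"
    using phi_coercive_on_RanB by blast
  moreover have "phi G (y j) \<le> phi G (y 0)" for j
    using decseqD[OF decseq_phi_y, of 0 j] by simp
  ultimately show ?thesis using that y_in_RanB by blast
qed

lemma bounded_range_y: "bounded (range y)"
proof -
  obtain c c' where c: "0 < c" and lower: "\<And>j. c * norm (y j) - c' \<le> phi G (y j)"
    and upper: "\<And>j. phi G (y j) \<le> phi G (y 0)"
    using phi_y_bounds by metis
  have "norm (y j) \<le> (phi G (y 0) + c') / c" for j
    using lower[of j] upper[of j] c by (simp add: pos_le_divide_eq mult.commute)
  then show ?thesis unfolding bounded_iff by blast
qed

lemma phi_y_diff_tendsto_0: "(\<lambda>j. phi G (y j) - phi G (y (Suc j))) \<longlonglongrightarrow> 0"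
proof -
  obtain c c' where c: "0 < c" and lower: "\<And>j. c * norm (y j) - c' \<le> phi G (y j)"
    using phi_y_bounds by metis
  have "- c' \<le> phi G (y j)" for j
    using lower[of j] mult_nonneg_nonneg[OF less_imp_le[OF c] norm_ge_zero[of "y j"]] by linarith
  then show ?thesis by (rule decseq_diff_tendsto_zero[OF decseq_phi_y])
qed

lemma grad_along_subsequence:
  assumes "(y \<circ> s) \<longlonglongrightarrow> yh"
  shows "(\<lambda>k. grad (s k)) \<longlonglongrightarrow> grad_phi G yh"
  using isCont_tendsto_compose[OF isCont_grad_phi assms] by (simp add: o_def)

lemma direction_tendsto_0_at_nonstationary_limit:
  assumes s: "strict_mono s" and lim: "(y \<circ> s) \<longlonglongrightarrow> yh" and nonstat: "grad_phi G yh \<noteq> 0"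
  shows "(\<lambda>k. d (s k)) \<longlonglongrightarrow> 0"
proof -
  define \<gamma> where "\<gamma> = norm (grad_phi G yh)"
  define \<epsilon> where "\<epsilon> = \<tau>1 * min \<tau>2 (\<gamma> / 2)"
  define \<kappa> where "\<kappa> = min 1 (\<delta> * ((1 - \<mu>) * \<epsilon> / (2 * CARD('n))))"
  have \<gamma>: "0 < \<gamma>" using nonstat by (simp add: \<gamma>_def)
  then have \<epsilon>: "0 < \<epsilon>" using tau by (simp add: \<epsilon>_def)
  then have \<kappa>: "0 < \<kappa>" using mu delta by (simp add: \<kappa>_def)
  have "(\<lambda>k. norm (grad (s k))) \<longlonglongrightarrow> \<gamma>"
    unfolding \<gamma>_def by (intro tendsto_norm grad_along_subsequence[OF lim])
  then have "\<forall>\<^sub>F k in sequentially. \<gamma> / 2 < norm (grad (s k))"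
    by (rule order_tendstoD(1)) (use \<gamma> in simp)
  then have "\<forall>\<^sub>F k in sequentially. \<epsilon> \<le> reg (s k)"
    by eventually_elim (use tau in \<open>simp add: \<epsilon>_def reg_def\<close>)
  then have bound: "\<forall>\<^sub>F k in sequentially.
      (norm (d (s k)))\<^sup>2 \<le> 2 / (\<mu> * \<kappa> * \<epsilon>) * (phi G (y (s k)) - phi G (y (Suc (s k))))"
  proof eventually_elim
    case (elim k)
    have "\<kappa> * \<epsilon> \<le> step (s k) * reg (s k)"
      using step_lower_bound[OF \<epsilon> elim] step_pos[of "s k"] elim \<epsilon>
      by (intro mult_mono) (simp_all add: \<kappa>_def)
    then have "\<mu> * (\<kappa> * \<epsilon>) * (norm (d (s k)))\<^sup>2 / 2
                 \<le> \<mu> * (step (s k) * reg (s k)) * (norm (d (s k)))\<^sup>2 / 2"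
      using mu by (intro divide_right_mono mult_right_mono mult_left_mono) simp_all
    then have "\<mu> * \<kappa> * \<epsilon> * (norm (d (s k)))\<^sup>2 \<le> 2 * (phi G (y (s k)) - phi G (y (Suc (s k))))"
      using sufficient_decrease[of "s k"] by (simp add: mult.assoc)
    then show ?case using mu \<kappa> \<epsilon> by (simp add: field_simps)
  qed
  have "(\<lambda>k. 2 / (\<mu> * \<kappa> * \<epsilon>) * (phi G (y (s k)) - phi G (y (Suc (s k))))) \<longlonglongrightarrow> 0"
    using LIMSEQ_subseq_LIMSEQ[OF phi_y_diff_tendsto_0 s]
    by (intro tendsto_mult_right_zero) (simp add: o_def)
  then have "(\<lambda>k. (norm (d (s k)))\<^sup>2) \<longlonglongrightarrow> 0"
    by (intro tendsto_sandwich[OF _ bound tendsto_const]) simp_all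
  then have "(\<lambda>k. sqrt ((norm (d (s k)))\<^sup>2)) \<longlonglongrightarrow> sqrt 0" by (rule tendsto_real_sqrt)
  then show ?thesis by (simp add: tendsto_norm_zero_iff)
qed

lemma grad_phi_eq_0_at_accumulation_point:
  assumes s: "strict_mono s" and lim: "(y \<circ> s) \<longlonglongrightarrow> yh"
  shows "grad_phi G yh = 0"
proof (rule ccontr)
  assume nonstat: "grad_phi G yh \<noteq> 0"
  define \<gamma> where "\<gamma> = norm (grad_phi G yh)"
  have \<gamma>: "0 < \<gamma>" using nonstat by (simp add: \<gamma>_def)
  have grad_norm_lim: "(\<lambda>k. norm (grad (s k))) \<longlonglongrightarrow> \<gamma>"
    unfolding \<gamma>_def by (intro tendsto_norm grad_along_subsequence[OF lim])
  have newton_step_lim: "(\<lambda>k. newton_op (s k) (d (s k))) \<longlonglongrightarrow> 0"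
  proof (rule Lim_null_comparison)
    show "\<forall>\<^sub>F k in sequentially. norm (newton_op (s k) (d (s k)))
                                  \<le> (2 * CARD('n) + \<tau>1 * \<tau>2) * norm (d (s k))"
      by (intro always_eventually allI norm_newton_op_le)
    show "(\<lambda>k. (2 * CARD('n) + \<tau>1 * \<tau>2) * norm (d (s k))) \<longlonglongrightarrow> 0"
      using direction_tendsto_0_at_nonstationary_limit[OF s lim nonstat]
      by (intro tendsto_mult_right_zero) (simp add: tendsto_norm_zero_iff)
  qed
  have residual: "(\<lambda>k. norm (newton_op (s k) (d (s k)) + grad (s k))) \<longlonglongrightarrow> \<gamma>"
    using tendsto_norm[OF tendsto_add[OF newton_step_lim grad_along_subsequence[OF lim]]]
    by (simp add: \<gamma>_def)
  have "\<gamma> \<le> \<eta>"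
    using cg_residual_le by (intro LIMSEQ_le_const2[OF residual]) simp
  moreover have "\<gamma> \<le> \<gamma> powr (1 + \<tau>)"
  proof (rule LIMSEQ_le[OF residual])
    show "(\<lambda>k. norm (grad (s k)) powr (1 + \<tau>)) \<longlonglongrightarrow> \<gamma> powr (1 + \<tau>)"
      using \<gamma> by (intro tendsto_powr grad_norm_lim tendsto_const) simp
    show "\<exists>N. \<forall>k\<ge>N. norm (newton_op (s k) (d (s k)) + grad (s k)) \<le> norm (grad (s k)) powr (1 + \<tau>)"
      using cg_residual_le by simp
  qed
  ultimately show False
    using powr_one_plus_less_self[OF \<gamma> _ tau(3)] eta by linarith
qed

end

theorem theorem3p2:
  fixes G :: "real ^ 'n ^ 'n"
    and y d :: "nat \<Rightarrow> (real ^ 'n) \<times> (real ^ 'n)"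
    and \<mu> \<eta> \<tau>1 \<tau>2 \<tau> \<delta> :: real
  assumes "0 < \<mu>" "\<mu> < 1/2" "0 < \<eta>" "\<eta> < 1"
    and "0 < \<tau>1" "\<tau>1 < 1" "0 < \<tau>2" "\<tau>2 < 1"
    and "0 < \<tau>" "\<tau> \<le> 1" "0 < \<delta>" "\<delta> < 1"
    and "y 0 \<in> RanB"
    and cg_step: "\<And>j. \<exists>k.
        (let A = (\<lambda>v. Vop (Bstar (y j) + G) v
                      + (\<tau>1 * min \<tau>2 (norm (grad_phi G (y j)))) *\<^sub>R v)
         in d j = cg_iterate A (grad_phi G (y j)) k
            \<and> norm (A (d j) + grad_phi G (y j))
                \<le> min \<eta> (norm (grad_phi G (y j)) powr (1 + \<tau>)))"
    and ls_step: "\<And>j. y (Suc j) = y j +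
        (\<delta> ^ (LEAST m. phi G (y j + (\<delta> ^ m) *\<^sub>R d j)
                 \<le> phi G (y j) + \<mu> * \<delta> ^ m * inner (grad_phi G (y j)) (d j))) *\<^sub>R d j"
  shows "range y \<subseteq> RanB \<and> bounded (range y) \<and>
         (\<forall>yh. yh \<in> RanB \<and> (\<exists>s. strict_mono s \<and> (y \<circ> s) \<longlonglongrightarrow> yh) \<longrightarrow> optimal G yh)"
proof -
  have "\<mu> < 1" using assms(2) by simp
  interpret ssncg1 G y d \<mu> \<eta> \<tau>1 \<tau>2 \<tau> \<delta>
    by unfold_locales (fact assms \<open>\<mu> < 1\<close>)+
  show ?thesis
    using y_in_RanB bounded_range_y grad_phi_eq_0_at_accumulation_point optimal_if_grad_phi_eq_0
    by blast
qed

end
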